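(* In the setting described in the context, let $\hat{\mathcal P}\subseteq\mathcal P_\Pi$ and $\hat{\mathcal R}\subseteq\mathcal R_\Pi$. Define problem MP1: minimize $c_1x+\eta$ over $x\in\mathcal X$, $\eta$, $u^\pi$ ($\pi\in\hat{\mathcal P}$), $v^\gamma$ ($\gamma\in\hat{\mathcal R}$) subject to $\eta\ge\pi^\intercal d-\pi^\intercal B_1x-\pi^\intercal Eu^\pi$ and $u^\pi\in\mathcal{OU}(x,\pi)$ for all $\pi\in\hat{\mathcal P}$, and $\gamma^\intercal d-\gamma^\intercal B_1x-\gamma^\intercal Ev^\gamma\le 0$ and $v^\gamma\in\mathcal{OU}(x,\gamma)$ for all $\gamma\in\hat{\mathcal R}$. Define problem MP2: minimize $c_1x+\eta$ over $x\in\mathcal X$, $\eta$, $u^\pi,y^\pi$ ($\pi\in\hat{\mathcal P}$), $v^\gamma,y^\gamma$ ($\gamma\in\hat{\mathcal R}$) subject to $\eta\ge c_2y^\pi$, $B_2y^\pi\ge d-B_1x-Eu^\pi$, $y^\pi\ge0$, $u^\pi\in\mathcal{OU}(x,\pi)$ for all $\pi\in\hat{\mathcal P}$, and $B_2y^\gamma\ge d-B_1x-Ev^\gamma$, $y^\gamma\ge 0$, $v^\gamma\in\mathcal{OU}(x,\gamma)$ for all $\gamma\in\hat{\mathcal R}$. Then the optimal value of MP1 is less than or equal to the optimal value of MP2.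
   Context: $\mathcal X=\{x\in\mathbb Z^{m_x}_+\times\mathbb R^{n_x}_+: Ax\ge b\}$, $\mathcal U(x)=\{u\in\mathbb R^{n_u}_+: F(x)u\le h+Gx\}$ with $F(x)$ a matrix depending on $x$. $\Pi=\{\pi\ge 0: B_2^\intercal\pi\le c_2^\intercal\}$, with finite sets of extreme points $\mathcal P_\Pi$ and extreme rays $\mathcal R_\Pi$. For a vector $\beta$, $\mathcal{OU}(x,\beta)$ is the set of optimal solutions of the linear program $\max\{(-Eu)^\intercal\beta: u\in\mathcal U(x)\}$. The optimal value of an infeasible minimization problem is $+\infty$. Standing assumptions: $\mathcal U(x)$ is nonempty and bounded for all $x\in\mathcal X$, and $\min\{c_1x+c_2y: x\in\mathcal X,u\in\mathcal U(x),y\ge 0, B_2y\ge d-B_1x-Eu\}$ is finite. *)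

theory Defs
  imports "HOL-Analysis.Analysis"
begin

text \<open>Vectors are elements of real^'n; inequalities between vectors are componentwise
  (the library order on vec). Row vectors c1, c2 and products like pi^T d are inner products.\<close>

definition Xset :: "real^'x^'a \<Rightarrow> real^'a \<Rightarrow> 'x set \<Rightarrow> (real^'x) set" where
  "Xset A b Iint = {x. 0 \<le> x \<and> (\<forall>i\<in>Iint. x $ i \<in> \<int>) \<and> b \<le> A *v x}"

definition Uset :: "(real^'x \<Rightarrow> real^'u^'k) \<Rightarrow> real^'k \<Rightarrow> real^'x^'k \<Rightarrow> real^'x \<Rightarrow> (real^'u) set" where
  "Uset F h G x = {u. 0 \<le> u \<and> F x *v u \<le> h + G *v x}"

definition OU :: "(real^'x \<Rightarrow> real^'u^'k) \<Rightarrow> real^'k \<Rightarrow> real^'x^'k \<Rightarrow> real^'u^'m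
                  \<Rightarrow> real^'x \<Rightarrow> real^'m \<Rightarrow> (real^'u) set" where
  "OU F h G E x \<beta> = {u \<in> Uset F h G x. \<forall>u'\<in>Uset F h G x. (- (E *v u')) \<bullet> \<beta> \<le> (- (E *v u)) \<bullet> \<beta>}"

definition PiSet :: "real^'y^'m \<Rightarrow> real^'y \<Rightarrow> (real^'m) set" where
  "PiSet B2 c2 = {p. 0 \<le> p \<and> transpose B2 *v p \<le> c2}"

definition rec_cone :: "(real^'m) set \<Rightarrow> (real^'m) set" where
  "rec_cone S = {r. \<forall>p\<in>S. \<forall>t\<ge>0. p + t *\<^sub>R r \<in> S}"

definition extreme_ray_of :: "real^'m \<Rightarrow> (real^'m) set \<Rightarrow> bool" where
  "extreme_ray_of r S \<longleftrightarrow> r \<noteq> 0 \<and> r \<in> rec_cone S \<and> {t *\<^sub>R r | t. 0 \<le> t} face_of rec_cone S"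

text \<open>Optimal value of MP1 (infimum in the extended reals; +\<infinity> if infeasible).\<close>
definition MP1_val ::
  "real^'x^'a \<Rightarrow> real^'a \<Rightarrow> 'x set \<Rightarrow> (real^'x \<Rightarrow> real^'u^'k) \<Rightarrow> real^'k \<Rightarrow> real^'x^'k
   \<Rightarrow> real^'u^'m \<Rightarrow> real^'x^'m \<Rightarrow> real^'m \<Rightarrow> real^'x
   \<Rightarrow> (real^'m) set \<Rightarrow> (real^'m) set \<Rightarrow> ereal" where
  "MP1_val A b Iint F h G E B1 d c1 Phat Rhat =
     Inf {ereal (c1 \<bullet> x + \<eta>) | x \<eta> uf vf.
            x \<in> Xset A b Iint \<and>
            (\<forall>p\<in>Phat. \<eta> \<ge> p \<bullet> d - p \<bullet> (B1 *v x) - p \<bullet> (E *v uf p) \<and> uf p \<in> OU F h G E x p) \<and>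
            (\<forall>g\<in>Rhat. g \<bullet> d - g \<bullet> (B1 *v x) - g \<bullet> (E *v vf g) \<le> 0 \<and> vf g \<in> OU F h G E x g)}"

definition MP2_val ::
  "real^'x^'a \<Rightarrow> real^'a \<Rightarrow> 'x set \<Rightarrow> (real^'x \<Rightarrow> real^'u^'k) \<Rightarrow> real^'k \<Rightarrow> real^'x^'k
   \<Rightarrow> real^'u^'m \<Rightarrow> real^'x^'m \<Rightarrow> real^'y^'m \<Rightarrow> real^'m \<Rightarrow> real^'x \<Rightarrow> real^'y
   \<Rightarrow> (real^'m) set \<Rightarrow> (real^'m) set \<Rightarrow> ereal" where
  "MP2_val A b Iint F h G E B1 B2 d c1 c2 Phat Rhat =
     Inf {ereal (c1 \<bullet> x + \<eta>) | x \<eta> uf yf vf zf.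
            x \<in> Xset A b Iint \<and>
            (\<forall>p\<in>Phat. \<eta> \<ge> c2 \<bullet> yf p \<and> B2 *v yf p \<ge> d - B1 *v x - E *v uf p \<and>
                        0 \<le> yf p \<and> uf p \<in> OU F h G E x p) \<and>
            (\<forall>g\<in>Rhat. B2 *v zf g \<ge> d - B1 *v x - E *v vf g \<and>
                        0 \<le> zf g \<and> vf g \<in> OU F h G E x g)}"

definition orig_val ::
  "real^'x^'a \<Rightarrow> real^'a \<Rightarrow> 'x set \<Rightarrow> (real^'x \<Rightarrow> real^'u^'k) \<Rightarrow> real^'k \<Rightarrow> real^'x^'k
   \<Rightarrow> real^'u^'m \<Rightarrow> real^'x^'m \<Rightarrow> real^'y^'m \<Rightarrow> real^'m \<Rightarrow> real^'x \<Rightarrow> real^'y \<Rightarrow> ereal" where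
  "orig_val A b Iint F h G E B1 B2 d c1 c2 =
     Inf {ereal (c1 \<bullet> x + c2 \<bullet> y) | x u y.
            x \<in> Xset A b Iint \<and> u \<in> Uset F h G x \<and> 0 \<le> y \<and> B2 *v y \<ge> d - B1 *v x - E *v u}"

end

theory Submission
  imports Defs
begin

text \<open>Every feasible point of MP2 yields a feasible point of MP1 with the same objective value,
  by weak LP duality: for \<pi> in \<Pi> and a second-stage solution y \<ge> 0 with B2 y \<ge> d - B1 x - E u
  we get \<pi>'(d - B1 x - E u) \<le> (B2' \<pi>)' y \<le> c2 y. An extreme ray \<gamma> of \<Pi> lies in the
  recession cone {\<gamma> \<ge> 0. B2' \<gamma> \<le> 0}, so the same chain bounds \<gamma>'(d - B1 x - E v) by 0.\<close>

lemma nonneg_slope_if_nonneg_on_halfline: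
  fixes a c :: real
  assumes "\<forall>t\<ge>0. 0 \<le> a + t * c"
  shows "0 \<le> c"
proof (rule ccontr)
  assume "\<not> 0 \<le> c"
  then have c: "c < 0" by simp
  define t where "t = (\<bar>a\<bar> + 1) / - c"
  have "0 \<le> t"
    using c unfolding t_def by (intro divide_nonneg_pos) auto
  moreover have "t * c = - (\<bar>a\<bar> + 1)"
    using c by (simp add: t_def)
  ultimately have "0 \<le> a - (\<bar>a\<bar> + 1)"
    using assms by fastforce
  then show False by linarith
qed

lemma inner_left_mono_nonneg:
  fixes a x y :: "real^'n"
  assumes "0 \<le> a" "x \<le> y"
  shows "a \<bullet> x \<le> a \<bullet> y"
  unfolding inner_vec_def
  using assms by (intro sum_mono) (simp add: less_eq_vec_def mult_left_mono)

lemma PiSet_weak_duality: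
  fixes B2 :: "real^'y^'m"
  assumes "p \<in> PiSet B2 c2" "0 \<le> y" "r \<le> B2 *v y"
  shows "p \<bullet> r \<le> c2 \<bullet> y"
proof -
  have "p \<bullet> r \<le> p \<bullet> (B2 *v y)"
    using assms by (intro inner_left_mono_nonneg) (auto simp: PiSet_def)
  also have "\<dots> = (transpose B2 *v p) \<bullet> y"
    by (simp add: dot_lmul_matrix)
  also have "\<dots> \<le> c2 \<bullet> y"
    using assms inner_left_mono_nonneg[of y "transpose B2 *v p" c2]
    by (simp add: PiSet_def inner_commute)
  finally show ?thesis .
qed

lemma rec_cone_PiSet:
  fixes B2 :: "real^'y^'m"
  assumes "PiSet B2 c2 \<noteq> {}"
  shows "rec_cone (PiSet B2 c2) = PiSet B2 0"
proof
  show "rec_cone (PiSet B2 c2) \<subseteq> PiSet B2 0"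
  proof
    fix g assume "g \<in> rec_cone (PiSet B2 c2)"
    moreover obtain p where p: "p \<in> PiSet B2 c2" using assms by blast
    ultimately have ray: "p + t *\<^sub>R g \<in> PiSet B2 c2" if "0 \<le> t" for t
      using that by (auto simp: rec_cone_def)
    have "0 \<le> g $ i" for i
    proof (rule nonneg_slope_if_nonneg_on_halfline[of "p $ i"], intro allI impI)
      fix t :: real assume "0 \<le> t"
      then show "0 \<le> p $ i + t * g $ i"
        using ray by (simp add: PiSet_def less_eq_vec_def)
    qed
    moreover have "0 \<le> - (transpose B2 *v g) $ i" for i
    proof (rule nonneg_slope_if_nonneg_on_halfline[of "c2 $ i - (transpose B2 *v p) $ i"],
        intro allI impI)
      fix t :: real assume "0 \<le> t"
      then have "(transpose B2 *v (p + t *\<^sub>R g)) $ i \<le> c2 $ i"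
        using ray by (simp add: PiSet_def less_eq_vec_def)
      then show "0 \<le> c2 $ i - (transpose B2 *v p) $ i + t * - (transpose B2 *v g) $ i"
        by (simp add: matrix_vector_right_distrib matrix_vector_mult_scaleR)
    qed
    ultimately show "g \<in> PiSet B2 0"
      by (simp add: PiSet_def less_eq_vec_def)
  qed
next
  show "PiSet B2 0 \<subseteq> rec_cone (PiSet B2 c2)"
  proof (clarsimp simp: rec_cone_def)
    fix g p and t :: real
    assume "g \<in> PiSet B2 0" "p \<in> PiSet B2 c2" "0 \<le> t"
    then have "0 \<le> g $ i" "0 \<le> p $ i"
      and "(transpose B2 *v g) $ j \<le> 0" "(transpose B2 *v p) $ j \<le> c2 $ j" for i j
      by (simp_all add: PiSet_def less_eq_vec_def del: transpose_matrix_vector)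
    with \<open>0 \<le> t\<close> show "p + t *\<^sub>R g \<in> PiSet B2 c2"
      by (simp add: PiSet_def less_eq_vec_def matrix_vector_right_distrib
          matrix_vector_mult_scaleR add_increasing2 del: transpose_matrix_vector)
        (metis add_mono add.right_neutral mult_nonneg_nonpos)
  qed
qed

lemma not_extreme_ray_of_empty: "\<not> extreme_ray_of r {}"
proof
  assume "extreme_ray_of r {}"
  then have "r \<noteq> 0" and "{t *\<^sub>R r | t. 0 \<le> t} face_of UNIV"
    by (simp_all add: extreme_ray_of_def rec_cone_def)
  then have "- r \<in> {t *\<^sub>R r | t. 0 \<le> t}"
    using face_of_affine_trivial[OF affine_UNIV] by blast
  then obtain t where "0 \<le> t" "- r = t *\<^sub>R r" by blast
  then have "(1 + t) *\<^sub>R r = 0" and "1 + t \<noteq> 0"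
    by (simp_all add: scaleR_left_distrib) (metis add.right_inverse)
  with \<open>r \<noteq> 0\<close> show False by simp
qed

lemma extreme_ray_of_PiSet_in_PiSet_0:
  fixes B2 :: "real^'y^'m"
  assumes "extreme_ray_of g (PiSet B2 c2)"
  shows "g \<in> PiSet B2 0"
proof -
  have "PiSet B2 c2 \<noteq> {}"
    using assms not_extreme_ray_of_empty by metis
  with assms show ?thesis
    by (simp add: extreme_ray_of_def rec_cone_PiSet)
qed

theorem proposition10:
  fixes A :: "real^'x^'a" and b :: "real^'a" and Iint :: "'x set"
    and F :: "real^'x \<Rightarrow> real^'u^'k" and h :: "real^'k" and G :: "real^'x^'k"
    and E :: "real^'u^'m" and B1 :: "real^'x^'m" and B2 :: "real^'y^'m" and d :: "real^'m"
    and c1 :: "real^'x" and c2 :: "real^'y"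
    and RPi Phat Rhat :: "(real^'m) set"
  assumes U_nonempty: "\<forall>x\<in>Xset A b Iint. Uset F h G x \<noteq> {}"
    and U_bounded: "\<forall>x\<in>Xset A b Iint. bounded (Uset F h G x)"
    and orig_finite: "orig_val A b Iint F h G E B1 B2 d c1 c2 \<noteq> \<infinity>"
                     "orig_val A b Iint F h G E B1 B2 d c1 c2 \<noteq> -\<infinity>"
    and RPi_finite: "finite RPi"
    and RPi_rays: "\<forall>r\<in>RPi. extreme_ray_of r (PiSet B2 c2)"
    and Phat_sub: "Phat \<subseteq> {p. p extreme_point_of PiSet B2 c2}"
    and Rhat_sub: "Rhat \<subseteq> RPi"
  shows "MP1_val A b Iint F h G E B1 d c1 Phat Rhat
           \<le> MP2_val A b Iint F h G E B1 B2 d c1 c2 Phat Rhat"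
  unfolding MP1_val_def MP2_val_def
proof (rule Inf_superset_mono, safe)
  fix x \<eta> uf yf vf zf
  assume "x \<in> Xset A b Iint"
    and P: "\<forall>p\<in>Phat. c2 \<bullet> yf p \<le> \<eta> \<and> d - B1 *v x - E *v uf p \<le> B2 *v yf p \<and>
                        0 \<le> yf p \<and> uf p \<in> OU F h G E x p"
    and R: "\<forall>g\<in>Rhat. d - B1 *v x - E *v vf g \<le> B2 *v zf g \<and>
                        0 \<le> zf g \<and> vf g \<in> OU F h G E x g"
  have "p \<bullet> d - p \<bullet> (B1 *v x) - p \<bullet> (E *v uf p) \<le> \<eta>" if "p \<in> Phat" for p
  proof -
    have "p \<in> PiSet B2 c2"
      using that Phat_sub by (auto simp: extreme_point_of_def)
    with that P show ?thesis
      using PiSet_weak_duality[of p B2 c2 "yf p" "d - B1 *v x - E *v uf p"]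
      by (simp add: inner_diff_right) (meson order_trans)
  qed
  moreover have "g \<bullet> d - g \<bullet> (B1 *v x) - g \<bullet> (E *v vf g) \<le> 0" if "g \<in> Rhat" for g
  proof -
    have "g \<in> PiSet B2 0"
      using that Rhat_sub RPi_rays extreme_ray_of_PiSet_in_PiSet_0 by blast
    with that R show ?thesis
      using PiSet_weak_duality[of g B2 0 "zf g" "d - B1 *v x - E *v vf g"]
      by (simp add: inner_diff_right)
  qed
  ultimately show "\<exists>x' \<eta>' uf' vf'. ereal (c1 \<bullet> x + \<eta>) = ereal (c1 \<bullet> x' + \<eta>') \<and> x' \<in> Xset A b Iint \<and>
      (\<forall>p\<in>Phat. p \<bullet> d - p \<bullet> (B1 *v x') - p \<bullet> (E *v uf' p) \<le> \<eta>' \<and> uf' p \<in> OU F h G E x' p) \<and>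
      (\<forall>g\<in>Rhat. g \<bullet> d - g \<bullet> (B1 *v x') - g \<bullet> (E *v vf' g) \<le> 0 \<and> vf' g \<in> OU F h G E x' g)"
    using \<open>x \<in> Xset A b Iint\<close> P R
    by (intro exI[of _ x] exI[of _ \<eta>] exI[of _ uf] exI[of _ vf]) simp
qed

end
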